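(* Let $A\in\mathbb{C}^{n\times n}$, $f\in\mathbb{C}^n$, $z, z_0\in\mathbb{C}$, $\delta\in\mathbb{R}$ and an integer $q\ge 1$. Define the polynomial \[ \tilde{p}(\lambda) = \sum_{j=0}^{q}\frac{(-\mathrm{i}\delta(\lambda-z_0))^j}{j!}, \] and assume $\tilde p(z)\neq 0$. Given $y^{(0)}\in\mathbb{C}^n$, define iterates $y^{(m)}$ by \[ \begin{aligned} k_1 &= -\mathrm{i}\delta\left((A-z_0I)y^{(m)} - f\right),\\ k_j &= \frac{-\mathrm{i}\delta}{j}\left((A-z_0I)k_{j-1}-\frac{(-\mathrm{i}\delta(z-z_0))^{j-1}}{(j-1)!}f\right),\quad j=2,\dots,q,\\ y^{(m+1)} &= \frac{y^{(m)} + \sum_{j=1}^{q} k_j }{\tilde{p}(z)}. \end{aligned} \] Let $y\in\mathbb{C}^n$ satisfy $(A-zI)y=f$. Then $y$ is a fixed point of this iteration (i.e. $y^{(m)}=y$ implies $y^{(m+1)}=y$), and for every $m\ge 0$, \[ y^{(m)} - y = \left(\frac{\tilde{p}(A)}{\tilde{p}(z)}\right)^m \left(y^{(0)} - y\right), \] where $\tilde p(A) = \sum_{j=0}^{q}\frac{(-\mathrm{i}\delta(A-z_0I))^j}{j!}$. *)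

theory Defs
  imports "HOL-Analysis.Analysis"
begin

primrec matpow :: "complex^'n^'n \<Rightarrow> nat \<Rightarrow> complex^'n^'n" where
  "matpow M 0 = mat 1"
| "matpow M (Suc k) = M ** matpow M k"

definition cmat_scale :: "complex \<Rightarrow> complex^'n^'m \<Rightarrow> complex^'n^'m" where
  "cmat_scale c M = (\<chi> i j. c * M $ i $ j)"

definition ptil :: "real \<Rightarrow> complex \<Rightarrow> nat \<Rightarrow> complex \<Rightarrow> complex" where
  "ptil \<delta> z0 q w = (\<Sum>j=0..q. (- \<i> * complex_of_real \<delta> * (w - z0)) ^ j / of_nat (fact j))"

definition ptilM :: "real \<Rightarrow> complex \<Rightarrow> nat \<Rightarrow> complex^'n^'n \<Rightarrow> complex^'n^'n" where
  "ptilM \<delta> z0 q A = (\<Sum>j=0..q.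
      cmat_scale (1 / of_nat (fact j)) (matpow (cmat_scale (- \<i> * complex_of_real \<delta>) (A - cmat_scale z0 (mat 1))) j))"

text \<open>The stage vectors k_j (j \<ge> 1) computed from the current iterate ym;
  kvec ... 0 is an unused dummy value.\<close>
fun kvec :: "complex^'n^'n \<Rightarrow> complex^'n \<Rightarrow> complex \<Rightarrow> complex \<Rightarrow> real \<Rightarrow> complex^'n \<Rightarrow> nat \<Rightarrow> complex^'n" where
  "kvec A f z z0 \<delta> ym 0 = 0"
| "kvec A f z z0 \<delta> ym (Suc 0) =
     (- \<i> * complex_of_real \<delta>) *s ((A - cmat_scale z0 (mat 1)) *v ym - f)"
| "kvec A f z z0 \<delta> ym (Suc (Suc j)) =
     ((- \<i> * complex_of_real \<delta>) / of_nat (Suc (Suc j))) *s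
       ((A - cmat_scale z0 (mat 1)) *v kvec A f z z0 \<delta> ym (Suc j)
        - ((- \<i> * complex_of_real \<delta> * (z - z0)) ^ Suc j / of_nat (fact (Suc j))) *s f)"

definition iter_step :: "complex^'n^'n \<Rightarrow> complex^'n \<Rightarrow> complex \<Rightarrow> complex \<Rightarrow> real \<Rightarrow> nat \<Rightarrow> complex^'n \<Rightarrow> complex^'n" where
  "iter_step A f z z0 \<delta> q ym =
     (1 / ptil \<delta> z0 q z) *s (ym + (\<Sum>j=1..q. kvec A f z z0 \<delta> ym j))"

end

theory Submission
  imports Defs
begin

text \<open>Each stage vector k_j is an affine function of the current iterate whose linear part is
  (-i \<delta> (A - z0 I))^j / j!, so one step of the iteration is affine with linear part
  p~(A) / p~(z). At a solution y we have (A - z0 I) y = f + (z - z0) y, so the inhomogeneous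
  terms cancel and k_j = (-i \<delta> (z - z0))^j / j! y; hence the step maps y to p~(z) y / p~(z) = y.
  An affine map with fixed point y and linear part M sends x to y + M(x - y), and iterating
  gives the error formula.\<close>

lemma cmat_scale_mult_vec: "cmat_scale c M *v x = c *s (M *v x)"
  by (simp add: cmat_scale_def vec_eq_iff matrix_vector_mult_def sum_distrib_left mult.assoc)

lemma sum_matrix_vector_mult: "(\<Sum>j\<in>S. M j) *v x = (\<Sum>j\<in>S. M j *v x)"
  by (induction S rule: infinite_finite_induct) (auto simp: matrix_vector_mult_add_rdistrib)

lemma funpow_minus_fixed_point:
  fixes F :: "complex^'n \<Rightarrow> complex^'n"
  assumes fixed: "F y = y" and linear_part: "\<And>u v. F u - F v = M *v (u - v)"
  shows "(F ^^ m) x - y = matpow M m *v (x - y)"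
proof (induction m)
  case (Suc m)
  have "(F ^^ Suc m) x - y = F ((F ^^ m) x) - F y"
    using fixed by simp
  also have "\<dots> = M *v ((F ^^ m) x - y)"
    by (rule linear_part)
  finally show ?case
    using Suc by (simp add: matrix_vector_mul_assoc)
qed simp

lemma kvec_Suc:
  assumes "j \<ge> 1"
  shows "kvec A f z z0 \<delta> ym (Suc j) =
     ((- \<i> * complex_of_real \<delta>) / of_nat (Suc j)) *s
       ((A - cmat_scale z0 (mat 1)) *v kvec A f z z0 \<delta> ym j
        - ((- \<i> * complex_of_real \<delta> * (z - z0)) ^ j / of_nat (fact j)) *s f)"
  using assms by (cases j) simp_all

lemma kvec_diff:
  assumes "j \<ge> 1"
  shows "kvec A f z z0 \<delta> u j - kvec A f z z0 \<delta> v j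
    = (1 / of_nat (fact j)) *s
        (matpow (cmat_scale (- \<i> * complex_of_real \<delta>) (A - cmat_scale z0 (mat 1))) j *v (u - v))"
  using assms
proof (induction j rule: nat_induct_at_least)
  case base
  show ?case
    by (simp add: cmat_scale_mult_vec matrix_vector_mult_diff_distrib vector_ssub_ldistrib)
next
  case (Suc j)
  define c where "c = - \<i> * complex_of_real \<delta>"
  define B where "B = A - cmat_scale z0 (mat 1)"
  have "kvec A f z z0 \<delta> u (Suc j) - kvec A f z z0 \<delta> v (Suc j)
      = (c / of_nat (Suc j)) *s (B *v (kvec A f z z0 \<delta> u j - kvec A f z z0 \<delta> v j))"
    using Suc.hyps
    by (simp add: kvec_Suc c_def B_def vec_eq_iff matrix_vector_mult_diff_distrib field_simps)
  also have "\<dots> = (c / of_nat (Suc j) / of_nat (fact j)) *s (B *v (matpow (cmat_scale c B) j *v (u - v)))"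
    unfolding Suc.IH c_def B_def by (simp add: vector_scalar_commute)
  also have "\<dots> = (1 / of_nat (fact (Suc j))) *s (matpow (cmat_scale c B) (Suc j) *v (u - v))"
    by (simp add: matrix_vector_mul_assoc[symmetric] cmat_scale_mult_vec vec_eq_iff field_simps)
  finally show ?case
    unfolding c_def B_def .
qed

lemma shift_mult_solution:
  assumes "(A - cmat_scale z (mat 1)) *v y = f"
  shows "(A - cmat_scale z0 (mat 1)) *v y = f + (z - z0) *s y"
proof -
  have "A - cmat_scale z0 (mat 1) = (A - cmat_scale z (mat 1)) + cmat_scale (z - z0) (mat 1)"
    by (simp add: cmat_scale_def vec_eq_iff mat_def algebra_simps)
  then have "(A - cmat_scale z0 (mat 1)) *v y
      = (A - cmat_scale z (mat 1)) *v y + cmat_scale (z - z0) (mat 1) *v y"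
    by (simp only: matrix_vector_mult_add_rdistrib)
  then show ?thesis
    using assms by (simp add: cmat_scale_mult_vec)
qed

lemma kvec_at_solution:
  assumes "j \<ge> 1" and solution: "(A - cmat_scale z (mat 1)) *v y = f"
  shows "kvec A f z z0 \<delta> y j = ((- \<i> * complex_of_real \<delta> * (z - z0)) ^ j / of_nat (fact j)) *s y"
  using assms(1)
proof (induction j rule: nat_induct_at_least)
  case base
  have "kvec A f z z0 \<delta> y 1 = (- \<i> * complex_of_real \<delta>) *s ((z - z0) *s y)"
    by (simp add: shift_mult_solution[OF solution])
  then show ?case
    by (simp add: vec_eq_iff algebra_simps)
next
  case (Suc j)
  define c where "c = - \<i> * complex_of_real \<delta>"
  define w where "w = c * (z - z0)"
  have "kvec A f z z0 \<delta> y (Suc j)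
      = (c / of_nat (Suc j)) *s ((w ^ j / of_nat (fact j)) *s (f + (z - z0) *s y)
          - (w ^ j / of_nat (fact j)) *s f)"
    unfolding kvec_Suc[OF Suc.hyps] Suc.IH vector_scalar_commute shift_mult_solution[OF solution]
      c_def w_def ..
  also have "\<dots> = (c / of_nat (Suc j) * (w ^ j / of_nat (fact j)) * (z - z0)) *s y"
    by (simp add: vec_eq_iff algebra_simps diff_divide_distrib)
  also have "c / of_nat (Suc j) * (w ^ j / of_nat (fact j)) * (z - z0)
      = w ^ Suc j / of_nat (fact (Suc j))"
    by (simp add: w_def field_simps)
  finally show ?case
    unfolding w_def c_def .
qed

lemma iter_step_diff:
  assumes "q \<ge> 1"
  shows "iter_step A f z z0 \<delta> q u - iter_step A f z z0 \<delta> q v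
    = cmat_scale (1 / ptil \<delta> z0 q z) (ptilM \<delta> z0 q A) *v (u - v)"
proof -
  define P where "P = cmat_scale (- \<i> * complex_of_real \<delta>) (A - cmat_scale z0 (mat 1))"
  have "ptilM \<delta> z0 q A *v (u - v) = (\<Sum>j=0..q. (1 / of_nat (fact j)) *s (matpow P j *v (u - v)))"
    unfolding ptilM_def P_def by (simp add: sum_matrix_vector_mult cmat_scale_mult_vec)
  also have "\<dots> = (u - v) + (\<Sum>j=1..q. (1 / of_nat (fact j)) *s (matpow P j *v (u - v)))"
    by (simp add: sum.atLeast_Suc_atMost)
  also have "(\<Sum>j=1..q. (1 / of_nat (fact j)) *s (matpow P j *v (u - v)))
     = (\<Sum>j=1..q. kvec A f z z0 \<delta> u j) - (\<Sum>j=1..q. kvec A f z z0 \<delta> v j)"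
    by (simp add: kvec_diff P_def flip: sum_subtractf)
  finally show ?thesis
    unfolding iter_step_def cmat_scale_mult_vec by (simp add: vector_ssub_ldistrib)
qed

lemma iter_step_fixed_point:
  assumes "ptil \<delta> z0 q z \<noteq> 0" and "(A - cmat_scale z (mat 1)) *v y = f"
  shows "iter_step A f z z0 \<delta> q y = y"
proof -
  have "y + (\<Sum>j=1..q. kvec A f z z0 \<delta> y j)
     = (\<Sum>j=0..q. ((- \<i> * complex_of_real \<delta> * (z - z0)) ^ j / of_nat (fact j)) *s y)"
    using assms(2) by (simp add: kvec_at_solution sum.atLeast_Suc_atMost)
  also have "\<dots> = ptil \<delta> z0 q z *s y"
    unfolding ptil_def by (simp add: vec_eq_iff sum_distrib_right)
  finally show ?thesis
    unfolding iter_step_def using assms(1) by simp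
qed

theorem theorem4p2:
  fixes A :: "complex^'n^'n" and f y y0 :: "complex^'n"
    and z z0 :: complex and \<delta> :: real and q :: nat
  assumes "q \<ge> 1"
    and "ptil \<delta> z0 q z \<noteq> 0"
    and "(A - cmat_scale z (mat 1)) *v y = f"
  shows "iter_step A f z z0 \<delta> q y = y
    \<and> (\<forall>m. (iter_step A f z z0 \<delta> q ^^ m) y0 - y
            = matpow (cmat_scale (1 / ptil \<delta> z0 q z) (ptilM \<delta> z0 q A)) m *v (y0 - y))"
proof
  show fixed: "iter_step A f z z0 \<delta> q y = y"
    using assms(2,3) by (rule iter_step_fixed_point)
  show "\<forall>m. (iter_step A f z z0 \<delta> q ^^ m) y0 - y
            = matpow (cmat_scale (1 / ptil \<delta> z0 q z) (ptilM \<delta> z0 q A)) m *v (y0 - y)"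
    using funpow_minus_fixed_point[OF fixed iter_step_diff[OF assms(1)]] by blast
qed

end
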